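(* Let $\mathcal{A}$ and $\mathcal{B}$ be unital $C^*$-algebras with units denoted $I$, and let $\Phi:\mathcal{A}\to\mathcal{B}$ be a positive linear map such that $\Phi(I)$ is invertible. Then \[ \Phi(A^*A)-\Phi(A)^*\Phi(I)^{-1}\Phi(A)\leq \Phi(|A-\alpha I|^2) \] for all $A\in\mathcal{A}$ and all $\alpha\in\mathbb{C}$.
   Context: For $X$ in a $C^*$-algebra, $|X|=(X^*X)^{1/2}$. *)

theory Defs
  imports "HOL-Analysis.Analysis"
begin

class cstar_algebra = banach + real_normed_algebra_1 +
  fixes cscale :: "complex \<Rightarrow> 'a \<Rightarrow> 'a"
    and adj :: "'a \<Rightarrow> 'a"
  assumes cscale_of_real: "cscale (complex_of_real r) x = scaleR r x"
    and cscale_add_right: "cscale c (x + y) = cscale c x + cscale c y"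
    and cscale_add_left: "cscale (c + d) x = cscale c x + cscale d x"
    and cscale_cscale: "cscale c (cscale d x) = cscale (c * d) x"
    and cscale_one: "cscale 1 x = x"
    and norm_cscale: "norm (cscale c x) = norm c * norm x"
    and cscale_mult_left: "cscale c x * y = cscale c (x * y)"
    and cscale_mult_right: "x * cscale c y = cscale c (x * y)"
    and adj_adj: "adj (adj x) = x"
    and adj_add: "adj (x + y) = adj x + adj y"
    and adj_cscale: "adj (cscale c x) = cscale (cnj c) (adj x)"
    and adj_mult: "adj (x * y) = adj y * adj x"
    and cstar_identity: "norm (adj x * x) = (norm x)\<^sup>2"

definition cinvertible :: "'a::cstar_algebra \<Rightarrow> bool" where
  "cinvertible x \<longleftrightarrow> (\<exists>y. x * y = 1 \<and> y * x = 1)"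

definition cinv :: "'a::cstar_algebra \<Rightarrow> 'a" where
  "cinv x = (THE y. x * y = 1 \<and> y * x = 1)"

definition cspectrum :: "'a::cstar_algebra \<Rightarrow> complex set" where
  "cspectrum a = {z. \<not> cinvertible (a - cscale z 1)}"

definition cpositive :: "'a::cstar_algebra \<Rightarrow> bool" where
  "cpositive a \<longleftrightarrow> adj a = a \<and> cspectrum a \<subseteq> complex_of_real ` {0..}"

definition cle :: "'a::cstar_algebra \<Rightarrow> 'a \<Rightarrow> bool" where
  "cle x y \<longleftrightarrow> cpositive (y - x)"

definition positive_linear_map :: "('a::cstar_algebra \<Rightarrow> 'b::cstar_algebra) \<Rightarrow> bool" where
  "positive_linear_map \<Phi> \<longleftrightarrow>
     (\<forall>x y. \<Phi> (x + y) = \<Phi> x + \<Phi> y) \<and>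
     (\<forall>c x. \<Phi> (cscale c x) = cscale c (\<Phi> x)) \<and>
     (\<forall>x. cpositive x \<longrightarrow> cpositive (\<Phi> x))"

end

theory Submission
  imports Defs "HOL-Computational_Algebra.Formal_Power_Series"
begin

text \<open>
  Expanding both sides, their difference is the Schur-complement term
  \<open>D\<^sup>* \<Phi>(I)\<^sup>-\<^sup>1 D\<close> with \<open>D = \<Phi>(A) - \<alpha> \<Phi>(I)\<close>; this uses linearity and \<open>\<Phi>(X\<^sup>*) = \<Phi>(X)\<^sup>*\<close>, the
  latter because a self-adjoint \<open>h\<close> is the difference of the positive elements \<open>\<parallel>h\<parallel> + h\<close> and
  \<open>\<parallel>h\<parallel>\<close>. As \<open>\<Phi>(I)\<close> is positive, so is its inverse, which is a square \<open>S\<^sup>2\<close> with \<open>S\<close>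
  self-adjoint; hence the difference equals \<open>(S D)\<^sup>* (S D) \<ge> 0\<close>.

  The C*-algebra is given by its axioms only, so the two classical facts behind this, positive
  square roots and the positivity of \<open>x\<^sup>* x\<close>, are derived from scratch: the norm of a
  self-adjoint element is bounded by its spectral radius (Rickart's elementary argument), which
  makes positivity a norm condition; square roots come from the binomial series of \<open>\<surd>(1 + w)\<close>;
  and \<open>x\<^sup>* x \<ge> 0\<close> follows by the argument of Fukamiya, Kelley and Vowden.
\<close>

section \<open>Scalars, adjoints and inverses\<close>

lemma cscale_zero_left [simp]: "cscale 0 (x::'a::cstar_algebra) = 0"
  using cscale_of_real[of 0 x] by simp

lemma cscale_zero_right [simp]: "cscale c (0::'a::cstar_algebra) = 0"
  using cscale_add_right[of c "0::'a" 0] by simp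

lemma cscale_minus_left: "cscale (-c) (x::'a::cstar_algebra) = - cscale c x"
  using cscale_add_left[of c "-c" x] by (metis add.right_inverse cscale_zero_left minus_unique)

lemma cscale_minus_right: "cscale c (-x::'a::cstar_algebra) = - cscale c x"
  using cscale_add_right[of c x "-x"] by (metis add.right_inverse cscale_zero_right minus_unique)

lemma cscale_diff_left: "cscale (c - d) (x::'a::cstar_algebra) = cscale c x - cscale d x"
  using cscale_add_left[of c "-d" x] by (simp add: cscale_minus_left)

lemma cscale_diff_right: "cscale c (x - y::'a::cstar_algebra) = cscale c x - cscale c y"
  using cscale_add_right[of c x "-y"] by (simp add: cscale_minus_right)

lemma cscale_one_mult: "cscale c 1 * (x::'a::cstar_algebra) = cscale c x"
  by (simp add: cscale_mult_left)

lemma mult_cscale_one: "(x::'a::cstar_algebra) * cscale c 1 = cscale c x"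
  by (simp add: cscale_mult_right)

lemma cscale_scaleR: "cscale c (r *\<^sub>R (x::'a::cstar_algebra)) = cscale (c * of_real r) x"
  by (metis cscale_cscale cscale_of_real)

lemma bounded_linear_cscale_left: "bounded_linear (\<lambda>c. cscale c (x::'a::cstar_algebra))"
  by (rule bounded_linear_intro[where K="norm x"])
     (simp_all add: cscale_add_left norm_cscale, metis cscale_cscale cscale_of_real scaleR_conv_of_real)

lemma adj_zero [simp]: "adj (0::'a::cstar_algebra) = 0"
  using adj_add[of "0::'a" 0] by simp

lemma adj_minus: "adj (- x::'a::cstar_algebra) = - adj x"
  using adj_add[of x "-x"] by (metis add.right_inverse adj_zero minus_unique)

lemma adj_diff: "adj (x - y::'a::cstar_algebra) = adj x - adj y"
  using adj_add[of x "-y"] by (simp add: adj_minus)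

lemma adj_one [simp]: "adj (1::'a::cstar_algebra) = 1"
  by (metis adj_adj adj_mult mult_1_right)

lemma adj_scaleR: "adj (r *\<^sub>R (x::'a::cstar_algebra)) = r *\<^sub>R adj x"
  by (metis adj_cscale cscale_of_real complex_cnj_complex_of_real)

lemma adj_power: "adj ((x::'a::cstar_algebra) ^ n) = adj x ^ n"
  by (induction n) (simp_all add: adj_mult power_commutes)

lemma norm_adj: "norm (adj (x::'a::cstar_algebra)) = norm x"
proof -
  have le: "norm y \<le> norm (adj y)" for y :: 'a
  proof (cases "y = 0")
    case False
    have "(norm y)^2 = norm (adj y * y)" by (simp add: cstar_identity)
    also have "\<dots> \<le> norm (adj y) * norm y" by (rule norm_mult_ineq)
    finally show ?thesis using False by (simp add: power2_eq_square)
  qed simp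
  show ?thesis using le[of x] le[of "adj x"] by (simp add: adj_adj)
qed

lemma bounded_linear_adj: "bounded_linear (adj :: 'a::cstar_algebra \<Rightarrow> 'a)"
  by (rule bounded_linear_intro[where K=1]) (simp_all add: adj_add adj_scaleR norm_adj)

lemma norm_mult_self_selfadjoint: "adj (x::'a::cstar_algebra) = x \<Longrightarrow> norm (x * x) = (norm x)^2"
  using cstar_identity[of x] by simp

lemma cinv_unique: "(x::'a::cstar_algebra) * y = 1 \<Longrightarrow> y * x = 1 \<Longrightarrow> cinv x = y"
  unfolding cinv_def
proof (rule the_equality)
  fix y' assume "x * y = 1" "y * x = 1" "x * y' = 1 \<and> y' * x = 1"
  then show "y' = y" by (metis mult.assoc mult_1_left mult_1_right)
qed auto

lemma cinvertibleI: "(x::'a::cstar_algebra) * y = 1 \<Longrightarrow> y * x = 1 \<Longrightarrow> cinvertible x"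
  unfolding cinvertible_def by blast

lemma cinvertibleI_left_right: "(x::'a::cstar_algebra) * y = 1 \<Longrightarrow> z * x = 1 \<Longrightarrow> cinvertible x"
  by (metis cinvertibleI mult.assoc mult_1_left mult_1_right)

lemma cinv_left: "cinvertible (x::'a::cstar_algebra) \<Longrightarrow> cinv x * x = 1"
  unfolding cinvertible_def using cinv_unique by metis

lemma cinv_right: "cinvertible (x::'a::cstar_algebra) \<Longrightarrow> x * cinv x = 1"
  unfolding cinvertible_def using cinv_unique by metis

lemma cinvertible_cinv: "cinvertible (x::'a::cstar_algebra) \<Longrightarrow> cinvertible (cinv x)"
  using cinv_left cinv_right cinvertibleI by metis

lemma cinv_cinv: "cinvertible (x::'a::cstar_algebra) \<Longrightarrow> cinv (cinv x) = x"
  using cinv_left cinv_right cinv_unique by metis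

lemma cinvertible_mult:
  "cinvertible (x::'a::cstar_algebra) \<Longrightarrow> cinvertible y \<Longrightarrow> cinvertible (x * y)"
  by (rule cinvertibleI[where y="cinv y * cinv x"])
     (simp_all add: mult.assoc cinv_left cinv_right,
      metis cinv_right mult.assoc mult_1_left, metis cinv_left mult.assoc mult_1_left)

lemma cinv_mult:
  "cinvertible (x::'a::cstar_algebra) \<Longrightarrow> cinvertible y \<Longrightarrow> cinv (x * y) = cinv y * cinv x"
  by (rule cinv_unique)
     (metis cinv_right mult.assoc mult_1_left, metis cinv_left mult.assoc mult_1_left)

lemma cinvertible_one [simp]: "cinvertible (1::'a::cstar_algebra)"
  by (rule cinvertibleI[of 1 1]) simp_all

lemma cinv_one [simp]: "cinv (1::'a::cstar_algebra) = 1"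
  by (rule cinv_unique) simp_all

lemma cinvertible_commuting_factor:
  assumes "(p::'a::cstar_algebra) * q = q * p" "cinvertible (p * q)"
  shows "cinvertible p"
proof -
  let ?w = "cinv (p * q)"
  have "p * (q * ?w) = 1" using cinv_right[OF assms(2)] by (simp add: mult.assoc)
  moreover have "(?w * q) * p = 1" using cinv_left[OF assms(2)] assms(1) by (simp add: mult.assoc)
  ultimately show ?thesis by (rule cinvertibleI_left_right)
qed

lemma cinvertible_cscale:
  "c \<noteq> 0 \<Longrightarrow> cinvertible (x::'a::cstar_algebra) \<Longrightarrow> cinvertible (cscale c x)"
  by (rule cinvertibleI[where y="cscale (inverse c) (cinv x)"])
     (simp_all add: cscale_mult_left cscale_mult_right cscale_cscale cinv_left cinv_right cscale_one)

lemma cinvertible_cscale_iff: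
  "c \<noteq> 0 \<Longrightarrow> cinvertible (cscale c (x::'a::cstar_algebra)) \<longleftrightarrow> cinvertible x"
  using cinvertible_cscale[of c x] cinvertible_cscale[of "inverse c" "cscale c x"]
  by (auto simp: cscale_cscale cscale_one)

lemma cinvertible_minus: "cinvertible (- (x::'a::cstar_algebra)) \<longleftrightarrow> cinvertible x"
  using cinvertible_cscale_iff[of "-1" x] by (simp add: cscale_minus_left cscale_one)

lemma cinv_adj: "cinvertible (x::'a::cstar_algebra) \<Longrightarrow> cinv (adj x) = adj (cinv x)"
  by (rule cinv_unique) (metis adj_mult adj_one cinv_left, metis adj_mult adj_one cinv_right)

text \<open>Jacobson's lemma: an inverse of \<open>1 - q p\<close> is \<open>1 + q (1 - p q)\<^sup>-\<^sup>1 p\<close>.\<close>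

lemma cinvertible_one_minus_commute:
  fixes p q :: "'a::cstar_algebra"
  assumes i: "cinvertible (1 - p * q)"
  shows "cinvertible (1 - q * p)"
proof -
  define W where "W = cinv (1 - p * q)"
  have r: "W - p * q * W = 1" using cinv_right[OF i] unfolding W_def by (simp add: algebra_simps)
  have l: "W - W * p * q = 1" using cinv_left[OF i] unfolding W_def by (simp add: algebra_simps mult.assoc)
  have "(1 - q * p) * (1 + q * W * p) = 1 - q * p + q * (W - p * q * W) * p"
    by (simp add: algebra_simps mult.assoc)
  also have "\<dots> = 1" using r by simp
  finally have A: "(1 - q * p) * (1 + q * W * p) = 1" .
  have "(1 + q * W * p) * (1 - q * p) = 1 - q * p + q * (W - W * p * q) * p"
    by (simp add: algebra_simps mult.assoc)
  also have "\<dots> = 1" using l by simp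
  finally have B: "(1 + q * W * p) * (1 - q * p) = 1" .
  from A B show ?thesis by (rule cinvertibleI)
qed

section \<open>Neumann series and continuity of inversion\<close>

lemma one_diff_mult_sum_powers: "(1 - (y::'a::ring_1)) * (\<Sum>n<N. y^n) = 1 - y^N"
proof (induction N)
  case (Suc N)
  have "(1 - y) * (\<Sum>n<Suc N. y^n) = (1 - y) * (\<Sum>n<N. y^n) + (1 - y) * y^N"
    by (simp add: distrib_left)
  also have "\<dots> = 1 - y^N + (y^N - y^Suc N)" using Suc by (simp add: left_diff_distrib)
  finally show ?case by simp
qed simp

lemma sum_powers_mult_one_diff: "(\<Sum>n<N. y^n) * (1 - (y::'a::ring_1)) = 1 - y^N"
proof (induction N)
  case (Suc N)
  have "(\<Sum>n<Suc N. y^n) * (1 - y) = (\<Sum>n<N. y^n) * (1 - y) + y^N * (1 - y)"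
    by (simp add: distrib_right)
  also have "\<dots> = 1 - y^N + (y^N - y^Suc N)"
    using Suc by (simp add: right_diff_distrib power_Suc2 power_commutes)
  finally show ?case by simp
qed simp

lemma neumann_series:
  fixes y :: "'a::cstar_algebra"
  assumes "norm y < 1"
  shows "cinvertible (1 - y) \<and> norm (cinv (1 - y) - 1) \<le> norm y / (1 - norm y)"
proof -
  have sg: "summable (\<lambda>n. norm y ^ n)" using assms by (simp add: summable_geometric)
  have "summable (\<lambda>n. norm (y ^ n))"
    by (rule summable_comparison_test[OF _ sg]) (simp add: norm_power_ineq)
  hence s: "summable (\<lambda>n. y ^ n)" by (rule summable_norm_cancel)
  define S where "S = (\<Sum>n. y ^ n)"
  have lim: "(\<lambda>N. \<Sum>n<N. y^n) \<longlonglongrightarrow> S" unfolding S_def using s by (rule summable_LIMSEQ)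
  have p0: "(\<lambda>N. y ^ N) \<longlonglongrightarrow> 0"
  proof (rule Lim_null_comparison[where g="\<lambda>N. norm y ^ N"])
    show "\<forall>\<^sub>F N in sequentially. norm (y ^ N) \<le> norm y ^ N" by (simp add: norm_power_ineq)
    show "(\<lambda>N. norm y ^ N) \<longlonglongrightarrow> 0" using assms by (simp add: LIMSEQ_power_zero)
  qed
  have l1: "(\<lambda>N. 1 - y ^ N) \<longlonglongrightarrow> 1" using tendsto_diff[OF tendsto_const p0, of 1] by simp
  have "(\<lambda>N. (1 - y) * (\<Sum>n<N. y^n)) \<longlonglongrightarrow> (1 - y) * S" by (intro tendsto_mult tendsto_const lim)
  hence r: "(1 - y) * S = 1" using l1 LIMSEQ_unique by (simp only: one_diff_mult_sum_powers)
  have "(\<lambda>N. (\<Sum>n<N. y^n) * (1 - y)) \<longlonglongrightarrow> S * (1 - y)" by (intro tendsto_mult tendsto_const lim)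
  hence l: "S * (1 - y) = 1" using l1 LIMSEQ_unique by (simp only: sum_powers_mult_one_diff)
  have "S - 1 = (\<Sum>n. y ^ Suc n)" unfolding S_def using suminf_split_head[OF s] by simp
  also have "norm \<dots> \<le> (\<Sum>n. norm y ^ Suc n)"
  proof (rule norm_suminf_le)
    show "norm (y ^ Suc n) \<le> norm y ^ Suc n" for n by (rule norm_power_ineq)
    show "summable (\<lambda>n. norm y ^ Suc n)" using summable_mult[OF sg, of "norm y"] by simp
  qed
  also have "\<dots> = norm y * (\<Sum>n. norm y ^ n)" by (subst suminf_mult[OF sg, symmetric]) simp
  also have "\<dots> = norm y / (1 - norm y)" using assms by (simp add: suminf_geometric divide_simps)
  finally show ?thesis using cinvertibleI[OF r l] cinv_unique[OF r l] by simp
qed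

lemma norm_cinv_one_minus_diff_le:
  fixes y :: "'a::cstar_algebra"
  assumes "norm y \<le> 1/2"
  shows "norm (cinv (1 - y) - 1) \<le> 2 * norm y"
proof -
  have "norm y < 1" using assms by simp
  hence "norm (cinv (1 - y) - 1) \<le> norm y / (1 - norm y)" using neumann_series by blast
  also have "\<dots> \<le> 2 * norm y" using assms mult_left_mono[of "norm y * 2" 1 "norm y"] by (simp add: field_simps)
  finally show ?thesis .
qed

lemma cinv_perturbation:
  fixes a b :: "'a::cstar_algebra"
  assumes a: "cinvertible a" and small: "norm (cinv a) * norm (b - a) \<le> 1/2"
  shows "cinvertible b \<and> norm (cinv b - cinv a) \<le> 2 * (norm (cinv a))^2 * norm (b - a)"
proof -
  define y where "y = cinv a * (a - b)"
  have ny: "norm y \<le> norm (cinv a) * norm (b - a)"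
    unfolding y_def using norm_mult_ineq[of "cinv a" "a - b"] by (simp add: norm_minus_commute)
  hence "norm y < 1" using small by simp
  hence i1: "cinvertible (1 - y)" using neumann_series by blast
  have b: "b = a * (1 - y)" unfolding y_def
    by (simp add: algebra_simps mult.assoc[symmetric] cinv_right[OF a])
  have "cinv b = cinv (1 - y) * cinv a" using b cinv_mult[OF a i1] by simp
  hence "cinv b - cinv a = (cinv (1 - y) - 1) * cinv a" by (simp add: algebra_simps)
  hence "norm (cinv b - cinv a) \<le> norm (cinv (1 - y) - 1) * norm (cinv a)"
    by (simp add: norm_mult_ineq)
  also have "\<dots> \<le> (2 * norm y) * norm (cinv a)"
    using norm_cinv_one_minus_diff_le[of y] ny small by (intro mult_right_mono) auto
  also have "\<dots> \<le> 2 * (norm (cinv a) * norm (b - a)) * norm (cinv a)"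
    using ny by (intro mult_right_mono) auto
  finally show ?thesis using b cinvertible_mult[OF a i1] by (simp add: power2_eq_square mult_ac)
qed

lemma continuous_on_cinv: "continuous_on {a. cinvertible a} (cinv :: 'a::cstar_algebra \<Rightarrow> 'a)"
  unfolding continuous_on_iff
proof (intro ballI allI impI)
  fix a :: 'a and e :: real
  assume a: "a \<in> {a. cinvertible a}" and e: "0 < e"
  define K where "K = norm (cinv a) + 1"
  have K: "norm (cinv a) \<le> K" "1 \<le> K" unfolding K_def by auto
  define d where "d = min (1 / (2 * K)) (e / (4 * K^2))"
  have "0 < d" unfolding d_def using K e by simp
  moreover have "dist (cinv b) (cinv a) < e" if b: "dist b a < d" for b
  proof -
    have nb: "norm (b - a) < d" using b by (simp add: dist_norm)
    have "norm (cinv a) * norm (b - a) \<le> K * (1 / (2 * K))"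
      using nb K by (intro mult_mono) (auto simp: d_def)
    hence "norm (cinv b - cinv a) \<le> 2 * (norm (cinv a))^2 * norm (b - a)"
      using cinv_perturbation[of a b] a K by simp
    also have "\<dots> \<le> 2 * K^2 * norm (b - a)" using K by (intro mult_right_mono) (auto simp: power_mono)
    also have "\<dots> < 2 * K^2 * (e / (4 * K^2))" using nb K by (intro mult_strict_left_mono) (auto simp: d_def)
    also have "\<dots> < e" using K e by (simp add: field_simps)
    finally show ?thesis by (simp add: dist_norm)
  qed
  ultimately show "\<exists>d>0. \<forall>b\<in>{a. cinvertible a}. dist b a < d \<longrightarrow> dist (cinv b) (cinv a) < e" by blast
qed

section \<open>Spectrum\<close>

lemma cspectrum_norm_le:
  fixes x :: "'a::cstar_algebra"
  assumes "z \<in> cspectrum x" shows "norm z \<le> norm x"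
proof (rule ccontr)
  assume "\<not> norm z \<le> norm x"
  hence zx: "norm x < norm z" and z0: "z \<noteq> 0" by auto
  have "norm (cscale (inverse z) x) = norm x / norm z"
    by (simp add: norm_cscale norm_inverse divide_inverse)
  hence "norm (cscale (inverse z) x) < 1" using zx z0 by simp
  hence "cinvertible (1 - cscale (inverse z) x)" using neumann_series by blast
  hence "cinvertible (cscale (-z) (1 - cscale (inverse z) x))" using z0 by (simp add: cinvertible_cscale)
  moreover have "cscale (-z) (1 - cscale (inverse z) x) = x - cscale z 1"
    using z0 by (simp add: cscale_diff_right cscale_cscale cscale_minus_left cscale_one)
  ultimately show False using assms by (simp add: cspectrum_def)
qed

lemma cspectrum_add_cscale_one:
  "z \<in> cspectrum (x + cscale c 1) \<longleftrightarrow> z - c \<in> cspectrum (x::'a::cstar_algebra)"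
  by (simp add: cspectrum_def cscale_diff_left algebra_simps)

lemma cspectrum_scaleR_one_diff:
  "z \<in> cspectrum (t *\<^sub>R 1 - (x::'a::cstar_algebra)) \<longleftrightarrow> complex_of_real t - z \<in> cspectrum x"
proof -
  have "t *\<^sub>R 1 - x - cscale z 1 = - (x - cscale (complex_of_real t - z) 1)"
    by (simp add: cscale_diff_left cscale_of_real algebra_simps)
  thus ?thesis by (simp only: cspectrum_def mem_Collect_eq cinvertible_minus)
qed

lemma cspectrum_minus: "z \<in> cspectrum (- (x::'a::cstar_algebra)) \<longleftrightarrow> -z \<in> cspectrum x"
proof -
  have "- x - cscale z 1 = - (x - cscale (-z) 1)" by (simp add: cscale_minus_left)
  thus ?thesis by (simp only: cspectrum_def mem_Collect_eq cinvertible_minus)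
qed

lemma cspectrum_cscale:
  "c \<noteq> 0 \<Longrightarrow> z \<in> cspectrum (cscale c x) \<longleftrightarrow> z / c \<in> cspectrum (x::'a::cstar_algebra)"
proof -
  assume c: "c \<noteq> 0"
  have "cscale c x - cscale z 1 = cscale c (x - cscale (z / c) 1)"
    using c by (simp add: cscale_diff_right cscale_cscale)
  thus ?thesis using c by (simp add: cspectrum_def cinvertible_cscale_iff)
qed

lemma cspectrum_cscale_one: "z \<in> cspectrum (cscale c (1::'a::cstar_algebra)) \<Longrightarrow> z = c"
  using cinvertible_cscale[of "c - z" "1::'a"] by (auto simp: cspectrum_def cscale_diff_left)

lemma cspectrum_mult_commute:
  fixes p q :: "'a::cstar_algebra"
  assumes mu: "\<mu> \<in> cspectrum (q * p)" and m0: "\<mu> \<noteq> 0"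
  shows "\<mu> \<in> cspectrum (p * q)"
proof (rule ccontr)
  assume "\<mu> \<notin> cspectrum (p * q)"
  hence i: "cinvertible (p * q - cscale \<mu> 1)" by (simp add: cspectrum_def)
  define p' where "p' = cscale (inverse \<mu>) p"
  have e1: "p * q - cscale \<mu> 1 = cscale (-\<mu>) (1 - p' * q)"
    unfolding p'_def using m0
    by (simp add: cscale_diff_right cscale_cscale cscale_mult_left cscale_minus_left cscale_one)
  have e2: "q * p - cscale \<mu> 1 = cscale (-\<mu>) (1 - q * p')"
    unfolding p'_def using m0
    by (simp add: cscale_diff_right cscale_cscale cscale_mult_right cscale_minus_left cscale_one)
  have "cinvertible (1 - p' * q)" using i e1 cinvertible_cscale_iff[of "-\<mu>" "1 - p' * q"] m0 by simp
  hence "cinvertible (1 - q * p')" by (rule cinvertible_one_minus_commute)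
  hence "cinvertible (q * p - cscale \<mu> 1)" using e2 cinvertible_cscale_iff[of "-\<mu>" "1 - q * p'"] m0 by simp
  thus False using mu by (simp add: cspectrum_def)
qed

lemma mult_diff_add_cscale_one:
  "(h - cscale c 1) * (h + cscale c 1) = h * h - cscale (c * c) (1::'a::cstar_algebra)"
  by (simp add: algebra_simps cscale_one_mult mult_cscale_one cscale_cscale cscale_diff_right cscale_one)

text \<open>For \<open>z\<close> in the spectrum and real \<open>s\<close>, \<open>z + i s\<close> lies in the spectrum of \<open>h + i s\<close>, whose
  norm is at most \<open>(\<parallel>h\<parallel>\<^sup>2 + s\<^sup>2)\<^sup>1\<^sup>/\<^sup>2\<close> by the C*-identity; a large \<open>s\<close> of the sign of \<open>Im z\<close>
  contradicts this unless \<open>Im z = 0\<close>.\<close>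

lemma cspectrum_selfadjoint_real:
  fixes h :: "'a::cstar_algebra"
  assumes h: "adj h = h" and z: "z \<in> cspectrum h"
  shows "Im z = 0"
proof (rule ccontr)
  assume nz: "Im z \<noteq> 0"
  have key: "(Re z)^2 + (Im z + s)^2 \<le> (norm h)^2 + s^2" for s :: real
  proof -
    let ?c = "\<i> * complex_of_real s"
    have "z + ?c \<in> cspectrum (h + cscale ?c 1)" using z by (simp add: cspectrum_add_cscale_one)
    hence "(norm (z + ?c))^2 \<le> (norm (h + cscale ?c 1))^2"
      by (simp add: power_mono cspectrum_norm_le)
    also have "(norm (h + cscale ?c 1))^2 = norm (adj (h + cscale ?c 1) * (h + cscale ?c 1))"
      by (simp add: cstar_identity)
    also have "adj (h + cscale ?c 1) = h - cscale ?c 1"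
      using h by (simp add: adj_add adj_cscale cscale_minus_left)
    also have "(h - cscale ?c 1) * (h + cscale ?c 1) = h * h + (s^2) *\<^sub>R 1"
      by (simp add: mult_diff_add_cscale_one cscale_minus_left flip: cscale_of_real)
         (simp add: power2_eq_square algebra_simps cscale_minus_left)
    also have "norm (h * h + (s^2) *\<^sub>R (1::'a)) \<le> (norm h)^2 + s^2"
      using norm_triangle_ineq[of "h*h" "(s^2) *\<^sub>R (1::'a)"] norm_mult_ineq[of h h]
      by (simp add: power2_eq_square)
    also have "(norm (z + ?c))^2 = (Re z)^2 + (Im z + s)^2" by (simp add: cmod_power2)
    finally show ?thesis by simp
  qed
  define s where "s = ((norm h)^2 + 1) / (2 * Im z)"
  have "(Re z)^2 + (Im z + s)^2 \<le> (norm h)^2 + s^2" by (rule key)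
  moreover have "2 * Im z * s = (norm h)^2 + 1" unfolding s_def using nz by simp
  ultimately show False by (simp add: power2_eq_square algebra_simps) (smt (verit) zero_le_square)
qed

section \<open>The norm of a self-adjoint element is its spectral radius\<close>

lemma norm_sum_list_le:
  fixes g :: "'b \<Rightarrow> 'a::real_normed_vector"
  assumes "\<And>w. w \<in> set Ws \<Longrightarrow> norm (g w) \<le> e"
  shows "norm (\<Sum>w\<leftarrow>Ws. g w) \<le> real (length Ws) * e"
  using assms
proof (induction Ws)
  case (Cons w Ws)
  have "norm (\<Sum>v\<leftarrow>w # Ws. g v) \<le> norm (g w) + norm (\<Sum>v\<leftarrow>Ws. g v)"
    by (simp add: norm_triangle_ineq)
  also have "\<dots> \<le> e + real (length Ws) * e" using Cons by (intro add_mono) auto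
  finally show ?case by (simp add: algebra_simps)
qed simp

lemma cinv_one_minus_mult_self:
  fixes w :: "'a::cstar_algebra"
  assumes A: "cinvertible (1 - w)" and B: "cinvertible (1 + w)"
  shows "cinvertible (1 - w * w) \<and> cinv (1 - w * w) = (1/2) *\<^sub>R (cinv (1 - w) + cinv (1 + w))"
proof -
  have e: "1 - w * w = (1 - w) * (1 + w)" and comm: "(1 - w) * (1 + w) = (1 + w) * (1 - w)"
    by (simp_all add: algebra_simps)
  let ?A = "cinv (1 - w)" and ?B = "cinv (1 + w)"
  have "(1 - w) * (1 + w) * ?A = 1 + w" using comm cinv_right[OF A] by (metis mult.assoc mult_1_right)
  moreover have "(1 - w) * (1 + w) * ?B = 1 - w" using cinv_right[OF B] by (metis mult.assoc mult_1_right)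
  ultimately have r: "(1 - w * w) * ((1/2) *\<^sub>R (?A + ?B)) = 1"
    unfolding e by (simp add: distrib_left scaleR_add_right[symmetric] scaleR_2[symmetric])
  have "?A * ((1 - w) * (1 + w)) = 1 + w" using cinv_left[OF A] by (metis mult.assoc mult_1_left)
  moreover have "?B * ((1 - w) * (1 + w)) = 1 - w" using comm cinv_left[OF B] by (metis mult.assoc mult_1_left)
  ultimately have l: "((1/2) *\<^sub>R (?A + ?B)) * (1 - w * w) = 1"
    unfolding e by (simp add: distrib_right scaleR_add_right[symmetric] scaleR_2[symmetric])
  show ?thesis using cinvertibleI[OF r l] cinv_unique[OF r l] by simp
qed

lemma norm_le_one_if_cinv_near_one:
  fixes w :: "'a::cstar_algebra"
  assumes inv: "cinvertible (1 - w)" and near: "norm (cinv (1 - w) - 1) < 1/2"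
  shows "norm w \<le> 1"
proof -
  define S where "S = cinv (1 - w)"
  have iS: "cinvertible S" and cS: "cinv S = 1 - w"
    unfolding S_def using cinvertible_cinv[OF inv] cinv_cinv[OF inv] by auto
  have nS: "norm (1 - S) \<le> 1/2" using near unfolding S_def by (simp add: norm_minus_commute)
  have "norm (cinv S - 1) \<le> 2 * norm (1 - S)"
    using norm_cinv_one_minus_diff_le[OF nS] by simp
  hence nc: "norm (cinv S) \<le> 2"
    using nS norm_triangle_ineq2[of "cinv S" 1] by simp
  have "w = cinv S * (S - 1)" using cS cinv_left[OF iS] by (simp add: algebra_simps)
  hence "norm w \<le> norm (cinv S) * norm (S - 1)" by (simp add: norm_mult_ineq)
  also have "\<dots> \<le> 2 * (1/2)" using nc near unfolding S_def by (intro mult_mono) auto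
  finally show ?thesis by simp
qed

lemma tendsto_cinv_one_minus:
  fixes w :: "nat \<Rightarrow> 'a::cstar_algebra"
  assumes "w \<longlonglongrightarrow> 0"
  shows "(\<lambda>m. cinv (1 - w m)) \<longlonglongrightarrow> 1"
proof (rule LIM_zero_cancel, rule Lim_null_comparison[where g="\<lambda>m. 2 * norm (w m)"])
  have "\<forall>\<^sub>F m in sequentially. norm (w m) < 1/2"
    using tendsto_norm_zero[OF assms] by (rule order_tendstoD) simp
  thus "\<forall>\<^sub>F m in sequentially. norm (cinv (1 - w m) - 1) \<le> 2 * norm (w m)"
    by eventually_elim (simp add: norm_cinv_one_minus_diff_le)
  show "(\<lambda>m. 2 * norm (w m)) \<longlonglongrightarrow> 0" using tendsto_norm_zero[OF assms] by (rule tendsto_mult_right_zero)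
qed

lemma Bseq_dyadic_powers_small:
  fixes x :: "'a::real_normed_algebra_1"
  assumes "0 \<le> t" "t * norm x \<le> 1"
  shows "Bseq (\<lambda>m. (t^(2^m)) *\<^sub>R x^(2^m))"
proof (rule BseqI')
  fix m :: nat
  have "norm ((t^(2^m)) *\<^sub>R x^(2^m)) \<le> t^(2^m) * norm x ^ (2^m)"
    using assms by (simp add: mult_left_mono norm_power_ineq)
  also have "\<dots> = (t * norm x)^(2^m)" by (simp add: power_mult_distrib)
  also have "\<dots> \<le> 1" using assms by (intro power_le_one) auto
  finally show "norm ((t^(2^m)) *\<^sub>R x^(2^m)) \<le> 1" .
qed

lemma Bseq_dyadic_powers_mono:
  fixes x :: "'a::real_normed_algebra_1"
  assumes "Bseq (\<lambda>m. (t^(2^m)) *\<^sub>R x^(2^m))" "0 \<le> s" "s \<le> t"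
  shows "Bseq (\<lambda>m. (s^(2^m)) *\<^sub>R x^(2^m))"
  by (rule Bseq_eventually_mono[OF always_eventually assms(1)])
     (use assms(2,3) in \<open>auto intro!: mult_right_mono power_mono\<close>)

lemma dyadic_powers_tendsto_zero:
  fixes x :: "'a::real_normed_algebra_1"
  assumes B: "Bseq (\<lambda>m. (t^(2^m)) *\<^sub>R x^(2^m))" and s: "0 \<le> s" "s < t"
  shows "(\<lambda>m. (s^(2^m)) *\<^sub>R x^(2^m)) \<longlonglongrightarrow> 0"
proof -
  obtain C where C: "\<And>m. norm ((t^(2^m)) *\<^sub>R x^(2^m)) \<le> C" using BseqE[OF B] by blast
  have q: "0 \<le> s/t" "s/t < 1" using s by auto
  show ?thesis
  proof (rule Lim_null_comparison[where g="\<lambda>m. C * (s/t)^m"])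
    show "\<forall>\<^sub>F m in sequentially. norm ((s^(2^m)) *\<^sub>R x^(2^m)) \<le> C * (s/t)^m"
    proof (intro always_eventually allI)
      fix m :: nat
      have "norm ((s^(2^m)) *\<^sub>R x^(2^m)) = (s/t)^(2^m) * norm ((t^(2^m)) *\<^sub>R x^(2^m))"
        using s by (simp add: power_divide)
      also have "\<dots> \<le> (s/t)^m * C"
        using C q by (intro mult_mono power_decreasing) (auto intro: less_imp_le less_exp)
      finally show "norm ((s^(2^m)) *\<^sub>R x^(2^m)) \<le> C * (s/t)^m" by (simp add: mult.commute)
    qed
    show "(\<lambda>m. C * (s/t)^m) \<longlonglongrightarrow> 0" using q by (intro tendsto_mult_right_zero LIMSEQ_power_zero) auto
  qed
qed

text \<open>Rickart's elementary proof: if \<open>1 - z x\<close> is invertible for \<open>|z| \<le> R\<close> with \<open>R > 1\<close>, the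
  powers \<open>x\<^sup>2\<^sup>^\<^sup>m\<close> are bounded. Boundedness of \<open>t\<^sup>2\<^sup>^\<^sup>m x\<^sup>2\<^sup>^\<^sup>m\<close> holds for small \<open>t\<close> and propagates
  in steps of fixed length up to \<open>t = 1\<close>, by uniform continuity of \<open>z \<mapsto> (1 - z x)\<^sup>-\<^sup>1\<close>
  and by writing \<open>(1 - z\<^sup>N x\<^sup>N)\<^sup>-\<^sup>1\<close> as an average over the \<open>N\<close>-th roots of unity.\<close>

context
  fixes x :: "'a::cstar_algebra" and R :: real
  assumes resolvent: "\<And>z. cmod z \<le> R \<Longrightarrow> cinvertible (1 - cscale z x)"
begin

lemma continuous_on_cinv_one_minus_cscale: "continuous_on (cball 0 R) (\<lambda>z. cinv (1 - cscale z x))"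
proof (rule continuous_on_compose2[OF continuous_on_cinv])
  show "continuous_on (cball 0 R) (\<lambda>z. 1 - cscale z x)"
    by (intro continuous_intros bounded_linear.continuous_on[OF bounded_linear_cscale_left])
  show "(\<lambda>z. 1 - cscale z x) ` cball 0 R \<subseteq> {a. cinvertible a}" using resolvent by auto
qed

lemma cinv_dyadic_power_average:
  "\<exists>Ws. length Ws = 2^m \<and> (\<forall>w\<in>set Ws. cmod w = 1) \<and>
     (\<forall>z. cmod z \<le> R \<longrightarrow> cinvertible (1 - cscale (z^(2^m)) (x^(2^m))) \<and>
        cinv (1 - cscale (z^(2^m)) (x^(2^m))) = (1 / 2^m) *\<^sub>R (\<Sum>w\<leftarrow>Ws. cinv (1 - cscale (w * z) x)))"
proof (induction m)
  case 0
  show ?case by (rule exI[of _ "[1]"]) (simp add: resolvent)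
next
  case (Suc m)
  define N :: nat where "N = 2^m"
  obtain Ws where W: "length Ws = N" "\<forall>w\<in>set Ws. cmod w = 1"
    "\<And>z. cmod z \<le> R \<Longrightarrow> cinvertible (1 - cscale (z^N) (x^N)) \<and>
        cinv (1 - cscale (z^N) (x^N)) = (1 / N) *\<^sub>R (\<Sum>w\<leftarrow>Ws. cinv (1 - cscale (w * z) x))"
    using Suc unfolding N_def by auto
  define \<zeta> where "\<zeta> = cis (pi / real N)"
  have \<zeta>: "\<zeta> ^ N = -1" "cmod \<zeta> = 1" unfolding \<zeta>_def Complex.DeMoivre N_def by simp_all
  show ?case
  proof (intro exI[of _ "Ws @ map (\<lambda>w. w * \<zeta>) Ws"] conjI allI impI)
    show "length (Ws @ map (\<lambda>w. w * \<zeta>) Ws) = 2 ^ Suc m" using W by (simp add: N_def)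
    show "\<forall>w\<in>set (Ws @ map (\<lambda>w. w * \<zeta>) Ws). cmod w = 1" using W \<zeta> by (auto simp: norm_mult)
    fix z :: complex assume z: "cmod z \<le> R"
    define w where "w = cscale (z^N) (x^N)"
    have "cmod (\<zeta> * z) \<le> R" using z \<zeta> by (simp add: norm_mult)
    moreover have "1 - cscale ((\<zeta> * z)^N) (x^N) = 1 + w"
      unfolding w_def by (simp add: power_mult_distrib \<zeta> cscale_minus_left)
    ultimately have B: "cinvertible (1 + w)"
      "cinv (1 + w) = (1 / N) *\<^sub>R (\<Sum>v\<leftarrow>Ws. cinv (1 - cscale (v * (\<zeta> * z)) x))"
      using W(3) by auto
    have A: "cinvertible (1 - w)" "cinv (1 - w) = (1 / N) *\<^sub>R (\<Sum>v\<leftarrow>Ws. cinv (1 - cscale (v * z) x))"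
      using W(3)[OF z] unfolding w_def by auto
    have e: "1 - cscale (z^(2 ^ Suc m)) (x^(2 ^ Suc m)) = 1 - w * w"
      unfolding w_def N_def
      by (simp add: cscale_mult_left cscale_mult_right cscale_cscale power_add[symmetric] mult_2)
    note sq = cinv_one_minus_mult_self[OF A(1) B(1)]
    show "cinvertible (1 - cscale (z ^ 2 ^ Suc m) (x ^ 2 ^ Suc m))" using sq e by simp
    show "cinv (1 - cscale (z ^ 2 ^ Suc m) (x ^ 2 ^ Suc m)) =
        (1 / 2 ^ Suc m) *\<^sub>R (\<Sum>v\<leftarrow>Ws @ map (\<lambda>w. w * \<zeta>) Ws. cinv (1 - cscale (v * z) x))"
      using sq e unfolding A(2) B(2) by (simp add: map_map o_def mult.assoc scaleR_add_right N_def)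
  qed
qed

lemma norm_cinv_dyadic_power_diff_le:
  assumes d: "\<forall>z\<in>cball 0 R. \<forall>z'\<in>cball 0 R. dist z' z < d \<longrightarrow>
      dist (cinv (1 - cscale z' x)) (cinv (1 - cscale z x)) < 1/4"
    and r: "0 \<le> r'" "r' \<le> r" "r \<le> R" "r - r' < d"
  shows "cinvertible (1 - (r^(2^m)) *\<^sub>R x^(2^m)) \<and>
    norm (cinv (1 - (r^(2^m)) *\<^sub>R x^(2^m)) - cinv (1 - (r'^(2^m)) *\<^sub>R x^(2^m))) \<le> 1/4"
proof -
  obtain Ws where W: "length Ws = 2^m" "\<forall>w\<in>set Ws. cmod w = 1"
    "\<forall>z. cmod z \<le> R \<longrightarrow> cinvertible (1 - cscale (z^(2^m)) (x^(2^m))) \<and>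
      cinv (1 - cscale (z^(2^m)) (x^(2^m))) = (1 / 2^m) *\<^sub>R (\<Sum>w\<leftarrow>Ws. cinv (1 - cscale (w * z) x))"
    using cinv_dyadic_power_average by blast
  let ?f = "\<lambda>r w. cinv (1 - cscale (w * of_real r) x)"
  have average: "cinvertible (1 - (\<rho>^(2^m)) *\<^sub>R x^(2^m)) \<and>
      cinv (1 - (\<rho>^(2^m)) *\<^sub>R x^(2^m)) = (1 / 2^m) *\<^sub>R (\<Sum>w\<leftarrow>Ws. ?f \<rho> w)"
    if "0 \<le> \<rho>" "\<rho> \<le> R" for \<rho>
    using W(3)[rule_format, of "of_real \<rho>"] that by (simp add: cscale_of_real flip: of_real_power)
  have "norm (\<Sum>w\<leftarrow>Ws. ?f r w - ?f r' w) \<le> real (length Ws) * (1/4)"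
  proof (rule norm_sum_list_le)
    fix w assume "w \<in> set Ws"
    hence "cmod w = 1" using W(2) by auto
    hence "w * of_real r \<in> cball 0 R" "w * of_real r' \<in> cball 0 R" "dist (w * of_real r) (w * of_real r') < d"
      using r by (simp_all add: norm_mult dist_norm right_diff_distrib[symmetric] flip: of_real_diff)
    thus "norm (?f r w - ?f r' w) \<le> 1/4" using d by (fastforce simp: dist_norm)
  qed
  thus ?thesis
    using average[of r] average[of r'] r W(1) by (simp add: sum_list_subtractf scaleR_diff_right[symmetric])
qed

lemma Bseq_dyadic_powers_step:
  assumes d: "0 < d" "\<forall>z\<in>cball 0 R. \<forall>z'\<in>cball 0 R. dist z' z < d \<longrightarrow>
      dist (cinv (1 - cscale z' x)) (cinv (1 - cscale z x)) < 1/4"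
    and B: "Bseq (\<lambda>m. (t^(2^m)) *\<^sub>R x^(2^m))" and t: "0 < t" "t \<le> s" "s \<le> R" "s \<le> t + d/2"
  shows "Bseq (\<lambda>m. (s^(2^m)) *\<^sub>R x^(2^m))"
proof -
  define t' where "t' = max 0 (t - d/4)"
  have t': "0 \<le> t'" "t' < t" "s - t' < d" unfolding t'_def using t d by auto
  have "(\<lambda>m. cinv (1 - (t'^(2^m)) *\<^sub>R x^(2^m))) \<longlonglongrightarrow> 1"
    by (rule tendsto_cinv_one_minus[OF dyadic_powers_tendsto_zero[OF B t'(1,2)]])
  hence "\<forall>\<^sub>F m in sequentially. norm (cinv (1 - (t'^(2^m)) *\<^sub>R x^(2^m)) - 1) < 1/4"
    by (rule tendstoD[where e="1/4", THEN eventually_mono]) (simp_all add: dist_norm)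
  hence "\<forall>\<^sub>F m in sequentially. norm ((s^(2^m)) *\<^sub>R x^(2^m)) \<le> 1"
  proof eventually_elim
    case (elim m)
    let ?S = "cinv (1 - (s^(2^m)) *\<^sub>R x^(2^m))" and ?T = "cinv (1 - (t'^(2^m)) *\<^sub>R x^(2^m))"
    have "cinvertible (1 - (s^(2^m)) *\<^sub>R x^(2^m))" "norm (?S - ?T) \<le> 1/4"
      using norm_cinv_dyadic_power_diff_le[OF d(2), of t' s m] t t' by auto
    moreover have "norm (?S - 1) \<le> norm (?S - ?T) + norm (?T - 1)"
      using norm_triangle_ineq[of "?S - ?T" "?T - 1"] by simp
    ultimately show ?case using elim by (intro norm_le_one_if_cinv_near_one) auto
  qed
  thus ?thesis by (rule BfunI)
qed

lemma Bseq_dyadic_powers_by_steps: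
  assumes d: "0 < d" "\<forall>z\<in>cball 0 R. \<forall>z'\<in>cball 0 R. dist z' z < d \<longrightarrow>
      dist (cinv (1 - cscale z' x)) (cinv (1 - cscale z x)) < 1/4"
    and t0: "0 < t0" "Bseq (\<lambda>m. (t0^(2^m)) *\<^sub>R x^(2^m))"
    and t: "0 < t" "t \<le> R" "t \<le> t0 + real k * (d/2)"
  shows "Bseq (\<lambda>m. (t^(2^m)) *\<^sub>R x^(2^m))"
  using t
proof (induction k arbitrary: t)
  case 0
  thus ?case using Bseq_dyadic_powers_mono[OF t0(2)] by simp
next
  case (Suc k)
  show ?case
  proof (cases "t \<le> t0 + real k * (d/2)")
    case True thus ?thesis using Suc by blast
  next
    case False
    define t1 where "t1 = t0 + real k * (d/2)"
    have t1: "0 < t1" "t1 \<le> t" using t0(1) d(1) False unfolding t1_def by (auto intro: add_pos_nonneg)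
    have "t0 + real (Suc k) * (d/2) = t1 + d/2" unfolding t1_def by (simp add: algebra_simps)
    hence step: "t \<le> t1 + d/2" using Suc.prems(3) by (simp only:)
    have "t1 \<le> R" using t1(2) Suc.prems(2) by (rule order_trans)
    moreover have "t1 \<le> t0 + real k * (d/2)" by (simp add: t1_def)
    ultimately have "Bseq (\<lambda>m. (t1^(2^m)) *\<^sub>R x^(2^m))" using Suc.IH t1(1) by blast
    thus ?thesis by (rule Bseq_dyadic_powers_step[OF d _ t1 Suc.prems(2) step])
  qed
qed

lemma Bseq_dyadic_powers_if_resolvent:
  assumes R1: "1 < R"
  shows "Bseq (\<lambda>m. x^(2^m))"
proof -
  have "uniformly_continuous_on (cball 0 R) (\<lambda>z. cinv (1 - cscale z x))"
    by (rule compact_uniformly_continuous[OF continuous_on_cinv_one_minus_cscale]) simp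
  then obtain d where d: "0 < d" "\<forall>z\<in>cball 0 R. \<forall>z'\<in>cball 0 R. dist z' z < d \<longrightarrow>
      dist (cinv (1 - cscale z' x)) (cinv (1 - cscale z x)) < 1/4"
    unfolding uniformly_continuous_on_def by (meson zero_less_divide_1_iff zero_less_numeral)
  define t0 where "t0 = 1 / (norm x + 1)"
  have "0 < norm x + 1" by (metis norm_ge_zero add_nonneg_pos zero_less_one)
  hence t0: "0 < t0" "t0 * norm x \<le> 1" unfolding t0_def by (simp_all add: field_simps)
  obtain k :: nat where "1 / (d/2) < real k" using reals_Archimedean2 by blast
  hence "1 \<le> t0 + real k * (d/2)" using d t0 by (simp add: field_simps)
  with R1 show ?thesis
    using Bseq_dyadic_powers_by_steps[OF d t0(1) Bseq_dyadic_powers_small[OF less_imp_le[OF t0(1)] t0(2)],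
        of 1 k]
    by simp
qed

end

lemma norm_dyadic_power_selfadjoint:
  fixes x :: "'a::cstar_algebra"
  assumes "adj x = x"
  shows "norm (x^(2^m)) = norm x ^ (2^m)"
proof (induction m)
  case (Suc m)
  have "x^(2^Suc m) = x^(2^m) * x^(2^m)" by (simp add: power_add[symmetric] mult_2)
  hence "norm (x^(2^Suc m)) = (norm (x^(2^m)))^2"
    using norm_mult_self_selfadjoint[of "x^(2^m)"] assms by (simp add: adj_power)
  also have "\<dots> = norm x ^ (2^Suc m)" using Suc by (simp add: power_mult[symmetric] mult.commute)
  finally show ?case .
qed simp

lemma not_Bseq_dyadic_powers_selfadjoint:
  fixes x :: "'a::cstar_algebra"
  assumes "adj x = x" and q1: "1 < norm x"
  shows "\<not> Bseq (\<lambda>m. x^(2^m))"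
proof
  assume "Bseq (\<lambda>m. x^(2^m))"
  then obtain C where C: "\<And>m. norm (x^(2^m)) \<le> C" by (metis BseqE)
  obtain m :: nat where m: "C / (norm x - 1) < real m" using reals_Archimedean2 by blast
  have "1 + real m * (norm x - 1) \<le> norm x ^ m" using Bernoulli_inequality[of "norm x - 1" m] q1 by simp
  also have "\<dots> \<le> norm x ^ (2^m)" using q1 by (intro power_increasing) (auto intro: less_imp_le less_exp)
  also have "\<dots> = norm (x^(2^m))" using norm_dyadic_power_selfadjoint[OF assms(1)] by simp
  also have "\<dots> \<le> C" by (rule C)
  finally show False using m q1 by (simp add: field_simps)
qed

text \<open>If the spectrum lies in the disc of radius \<open>r < \<rho>1 < \<rho> < \<parallel>k\<parallel>\<close>, then \<open>x = k / \<rho>\<close> has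
  \<open>1 - z x\<close> invertible for \<open>|z| \<le> \<rho> / \<rho>1\<close>, so its dyadic powers are bounded, although \<open>\<parallel>x\<parallel> > 1\<close>.\<close>

lemma norm_selfadjoint_le_spectral_bound:
  fixes k :: "'a::cstar_algebra"
  assumes k: "adj k = k" and r: "0 \<le> r" and sp: "\<And>z. z \<in> cspectrum k \<Longrightarrow> cmod z \<le> r"
  shows "norm k \<le> r"
proof (rule ccontr)
  assume "\<not> norm k \<le> r"
  define \<rho>1 where "\<rho>1 = r + (norm k - r)/3"
  define \<rho> where "\<rho> = r + 2 * (norm k - r)/3"
  have \<rho>: "0 < \<rho>1" "r < \<rho>1" "\<rho>1 < \<rho>" "\<rho> < norm k"
    unfolding \<rho>1_def \<rho>_def using r \<open>\<not> norm k \<le> r\<close> by (auto simp: field_simps)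
  define x where "x = (1/\<rho>) *\<^sub>R k"
  have "cinvertible (1 - cscale z x)" if z: "cmod z \<le> \<rho> / \<rho>1" for z
  proof (cases "z = 0")
    case False
    have "r < \<rho> / (\<rho> / \<rho>1)" using \<rho> by simp
    also have "\<dots> \<le> \<rho> / cmod z" using z False \<rho> by (intro divide_left_mono) auto
    also have "\<dots> = cmod (of_real \<rho> / z)" using \<rho> by (simp add: norm_divide)
    finally have "cinvertible (k - cscale (of_real \<rho> / z) 1)"
      using sp by (force simp: cspectrum_def)
    hence "cinvertible (cscale (-(z / of_real \<rho>)) (k - cscale (of_real \<rho> / z) 1))"
      using False \<rho> by (intro cinvertible_cscale) auto
    moreover have "cscale (-(z / of_real \<rho>)) (k - cscale (of_real \<rho> / z) 1) = 1 - cscale z x"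
      unfolding x_def using False \<rho>
      by (simp add: cscale_diff_right cscale_cscale cscale_scaleR cscale_minus_left cscale_one field_simps)
    ultimately show ?thesis by simp
  qed simp
  moreover have "1 < \<rho> / \<rho>1" using \<rho> by simp
  ultimately have "Bseq (\<lambda>m. x^(2^m))" by (rule Bseq_dyadic_powers_if_resolvent)
  moreover have "adj x = x" "1 < norm x" unfolding x_def using k \<rho> by (simp_all add: adj_scaleR)
  ultimately show False using not_Bseq_dyadic_powers_selfadjoint by blast
qed

section \<open>Positive elements\<close>

lemma image_of_real_nonneg_iff: "z \<in> complex_of_real ` {0..} \<longleftrightarrow> Im z = 0 \<and> Re z \<ge> 0"
  by (auto simp: image_iff complex_eq_iff intro!: bexI[of _ "Re z"])

lemma cpositive_iff: "cpositive a \<longleftrightarrow> adj a = a \<and> (\<forall>z\<in>cspectrum a. Im z = 0 \<and> Re z \<ge> 0)"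
  by (auto simp: cpositive_def image_of_real_nonneg_iff)

lemma cpositive_mult_self_selfadjoint:
  fixes k :: "'a::cstar_algebra"
  assumes k: "adj k = k"
  shows "cpositive (k * k)"
proof -
  have "Im \<mu> = 0 \<and> Re \<mu> \<ge> 0" if mu: "\<mu> \<in> cspectrum (k * k)" for \<mu>
  proof -
    define \<omega> where "\<omega> = csqrt \<mu>"
    have w2: "\<omega> * \<omega> = \<mu>" unfolding \<omega>_def by (metis power2_csqrt power2_eq_square)
    have "k * k - cscale \<mu> 1 = (k - cscale \<omega> 1) * (k + cscale \<omega> 1)"
      by (simp add: mult_diff_add_cscale_one w2)
    hence "\<not> cinvertible (k - cscale \<omega> 1) \<or> \<not> cinvertible (k + cscale \<omega> 1)"
      using mu cinvertible_mult by (auto simp: cspectrum_def)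
    hence "\<omega> \<in> cspectrum k \<or> -\<omega> \<in> cspectrum k" by (auto simp: cspectrum_def cscale_minus_left)
    hence "Im \<omega> = 0" using cspectrum_selfadjoint_real[OF k] by fastforce
    hence "\<mu> = complex_of_real ((Re \<omega>)^2)" using w2 by (simp add: complex_eq_iff power2_eq_square)
    thus ?thesis by simp
  qed
  thus ?thesis using k by (simp add: cpositive_iff adj_mult)
qed

text \<open>For self-adjoint \<open>b\<close> and \<open>t \<ge> \<parallel>b\<parallel>\<close>, positivity of \<open>b\<close> is equivalent to \<open>\<parallel>t - b\<parallel> \<le> t\<close>: this
  turns positivity into a norm condition, which is how sums and series of positive elements
  are handled.\<close>

lemma norm_scaleR_one_diff_le_if_cpositive:
  fixes b :: "'a::cstar_algebra"
  assumes b: "cpositive b" and t: "norm b \<le> t"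
  shows "norm (t *\<^sub>R 1 - b) \<le> t"
proof (rule norm_selfadjoint_le_spectral_bound)
  show "adj (t *\<^sub>R 1 - b) = t *\<^sub>R 1 - b" using b by (simp add: cpositive_def adj_diff adj_scaleR)
  show "0 \<le> t" using t norm_ge_zero order_trans by blast
  fix z assume "z \<in> cspectrum (t *\<^sub>R 1 - b)"
  hence l: "complex_of_real t - z \<in> cspectrum b" by (simp add: cspectrum_scaleR_one_diff)
  hence "Im (complex_of_real t - z) = 0 \<and> Re (complex_of_real t - z) \<ge> 0"
    using b unfolding cpositive_iff by blast
  moreover have "cmod (complex_of_real t - z) \<le> t" using cspectrum_norm_le[OF l] t by simp
  ultimately have "Im z = 0" "Re z \<le> t" "Re z \<ge> 0"
    using abs_Re_le_cmod[of "complex_of_real t - z"] by auto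
  thus "cmod z \<le> t" by (simp add: cmod_eq_Re)
qed

lemma cpositive_if_norm_scaleR_one_diff_le:
  fixes c :: "'a::cstar_algebra"
  assumes c: "adj c = c" and t: "norm (t *\<^sub>R 1 - c) \<le> t"
  shows "cpositive c"
  unfolding cpositive_iff
proof (rule conjI[OF c], rule ballI)
  fix z assume z: "z \<in> cspectrum c"
  have im: "Im z = 0" by (rule cspectrum_selfadjoint_real[OF c z])
  have "complex_of_real t - (complex_of_real t - z) \<in> cspectrum c" using z by simp
  hence "complex_of_real t - z \<in> cspectrum (t *\<^sub>R 1 - c)" by (simp only: cspectrum_scaleR_one_diff)
  hence "cmod (complex_of_real t - z) \<le> t" using cspectrum_norm_le t by fastforce
  hence "\<bar>t - Re z\<bar> \<le> t" using im by (simp add: cmod_eq_Re)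
  thus "Im z = 0 \<and> 0 \<le> Re z" using im by simp
qed

lemma cpositive_add:
  fixes a b :: "'a::cstar_algebra"
  assumes a: "cpositive a" and b: "cpositive b"
  shows "cpositive (a + b)"
proof (rule cpositive_if_norm_scaleR_one_diff_le)
  show "adj (a + b) = a + b" using a b by (simp add: cpositive_def adj_add)
  have "(norm a + norm b) *\<^sub>R 1 - (a + b) = (norm a *\<^sub>R 1 - a) + (norm b *\<^sub>R 1 - b)"
    by (simp add: algebra_simps scaleR_add_left)
  also have "norm \<dots> \<le> norm a + norm b"
    using norm_scaleR_one_diff_le_if_cpositive[OF a order_refl]
      norm_scaleR_one_diff_le_if_cpositive[OF b order_refl] norm_triangle_ineq
    by (smt (verit))
  finally show "norm ((norm a + norm b) *\<^sub>R 1 - (a + b)) \<le> norm a + norm b" .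
qed

lemma cpositive_zero: "cpositive (0::'a::cstar_algebra)"
  unfolding cpositive_iff using cspectrum_cscale_one[of _ 0] by force

lemma cpositive_one: "cpositive (1::'a::cstar_algebra)"
  unfolding cpositive_iff using cspectrum_cscale_one[of _ 1] by (force simp: cscale_one)

lemma cpositive_scaleR:
  fixes b :: "'a::cstar_algebra"
  assumes b: "cpositive b" and r: "0 \<le> r"
  shows "cpositive (r *\<^sub>R b)"
proof (cases "r = 0")
  case True thus ?thesis by (simp add: cpositive_zero)
next
  case False
  have "Im z = 0 \<and> 0 \<le> Re z" if "z \<in> cspectrum (r *\<^sub>R b)" for z
  proof -
    have "z / complex_of_real r \<in> cspectrum b"
      using that cspectrum_cscale[of "complex_of_real r" z b] False by (simp add: cscale_of_real)
    hence "Im (z / complex_of_real r) = 0 \<and> Re (z / complex_of_real r) \<ge> 0"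
      using b unfolding cpositive_iff by blast
    thus ?thesis using r False by (simp add: Im_divide_of_real Re_divide_of_real zero_le_divide_iff)
  qed
  thus ?thesis using b by (simp add: cpositive_iff adj_scaleR)
qed

lemma cpositive_norm_scaleR_one_add:
  fixes h :: "'a::cstar_algebra"
  assumes h: "adj h = h"
  shows "cpositive (norm h *\<^sub>R 1 + h)"
  by (rule cpositive_if_norm_scaleR_one_diff_le[where t="norm h"]) (simp_all add: h adj_add adj_scaleR)

lemma cpositive_cinv:
  fixes u :: "'a::cstar_algebra"
  assumes u: "cpositive u" and i: "cinvertible u"
  shows "cpositive (cinv u)"
proof -
  have "Im \<mu> = 0 \<and> 0 \<le> Re \<mu>" if mu: "\<mu> \<in> cspectrum (cinv u)" for \<mu>
  proof -
    have m0: "\<mu> \<noteq> 0" using mu cinvertible_cinv[OF i] by (auto simp: cspectrum_def)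
    have "cinv u - cscale \<mu> 1 = cscale (-\<mu>) (cinv u * (u - cscale (inverse \<mu>) 1))"
      using m0 by (simp add: right_diff_distrib cinv_left[OF i] cscale_diff_right mult_cscale_one
          cscale_cscale cscale_minus_left cscale_one)
    hence "inverse \<mu> \<in> cspectrum u"
      using mu m0 cinvertible_cscale[of "-\<mu>"] cinvertible_mult[OF cinvertible_cinv[OF i]]
      by (auto simp: cspectrum_def)
    hence "Im (inverse \<mu>) = 0 \<and> Re (inverse \<mu>) \<ge> 0" using u unfolding cpositive_iff by blast
    hence "inverse \<mu> \<in> complex_of_real ` {0..}" by (simp add: image_of_real_nonneg_iff)
    then obtain s where s: "s \<ge> 0" "inverse \<mu> = complex_of_real s" by auto
    hence "\<mu> = complex_of_real (inverse s)" by (metis inverse_inverse_eq of_real_inverse)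
    thus ?thesis using s by simp
  qed
  thus ?thesis using u cinv_adj[OF i] by (simp add: cpositive_iff)
qed

section \<open>Square roots of positive elements\<close>

definition sqrt_coeff :: "nat \<Rightarrow> real" where
  "sqrt_coeff n = (1/2) gchoose n"

lemma sqrt_coeff_0 [simp]: "sqrt_coeff 0 = 1"
  by (simp add: sqrt_coeff_def)

lemma sqrt_coeff_Suc: "sqrt_coeff (Suc n) = sqrt_coeff n * (1/2 - real n) / (real n + 1)"
  using gbinomial_mult_1[of "1/2::real" n] unfolding sqrt_coeff_def by (simp add: field_simps)

lemma sqrt_coeff_alternating_nonpos: "n \<ge> 1 \<Longrightarrow> (-1)^n * sqrt_coeff n \<le> 0"
proof (induction n rule: dec_induct)
  case base thus ?case using sqrt_coeff_Suc[of 0] by simp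
next
  case (step n)
  have "(-1)^Suc n * sqrt_coeff (Suc n) = ((-1)^n * sqrt_coeff n) * ((real n - 1/2) / (real n + 1))"
    by (simp add: sqrt_coeff_Suc field_simps)
  moreover have "(real n - 1/2) / (real n + 1) \<ge> 0" using step(1) by simp
  ultimately show ?case using step(3) by (metis mult_nonpos_nonneg)
qed

lemma abs_sqrt_coeff: "n \<ge> 1 \<Longrightarrow> \<bar>sqrt_coeff n\<bar> = - ((-1)^n * sqrt_coeff n)"
  using sqrt_coeff_alternating_nonpos[of n] abs_mult[of "(-1)^n" "sqrt_coeff n"] by simp

lemma sqrt_coeff_convolution:
  "(\<Sum>k\<le>n. sqrt_coeff k * sqrt_coeff (n - k)) = (if n \<le> 1 then 1 else 0)"
proof -
  have "(\<Sum>k\<le>n. sqrt_coeff k * sqrt_coeff (n - k)) = (1/2 + 1/2::real) gchoose n"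
    unfolding sqrt_coeff_def atLeast0AtMost[symmetric] by (rule gbinomial_Vandermonde)
  also have "\<dots> = real (1 choose n)" by (simp add: binomial_gbinomial)
  also have "\<dots> = (if n \<le> 1 then 1 else 0)" by (cases n) (auto simp: binomial_eq_0)
  finally show ?thesis .
qed

text \<open>Since all coefficients but the first are \<open>\<le> 0\<close> at \<open>-t\<close>, the partial sums of the series of
  \<open>\<surd>(1 - t)\<close> decrease to a nonnegative limit, which bounds \<open>\<Sum>\<^sub>n\<^sub>\<ge>\<^sub>1 |sqrt_coeff n| t\<^sup>n\<close> by \<open>1\<close>.\<close>

lemma sum_abs_sqrt_coeff_powers_le:
  fixes t :: real
  assumes t: "0 \<le> t" "t < 1"
  shows "(\<Sum>n<N. \<bar>sqrt_coeff n\<bar> * t^n) \<le> 2"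
proof (cases "N = 0")
  case N: False
  have neg: "sqrt_coeff n * (-t)^n = ((-1)^n * sqrt_coeff n) * t^n" for n
    by (simp only: power_minus[of t] mult_ac)
  have s: "(\<lambda>n. sqrt_coeff n * (-t)^n) sums sqrt (1 + (-t))"
    using sqrt_series[of "-t"] t unfolding sqrt_coeff_def by simp
  have tail: "(\<lambda>n. sqrt_coeff (n + N) * (-t)^(n + N)) sums (sqrt (1 - t) - (\<Sum>n<N. sqrt_coeff n * (-t)^n))"
    using sums_split_initial_segment[OF s, of N] by simp
  have "(\<Sum>n. sqrt_coeff (n + N) * (-t)^(n + N)) \<le> (\<Sum>n. 0::real)"
  proof (rule suminf_le)
    show "summable (\<lambda>n. sqrt_coeff (n + N) * (- t) ^ (n + N))" using tail by (rule sums_summable)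
    show "sqrt_coeff (n + N) * (-t)^(n + N) \<le> 0" for n
      unfolding neg by (rule mult_nonpos_nonneg[OF sqrt_coeff_alternating_nonpos]) (use N t in auto)
  qed simp
  moreover have "0 \<le> sqrt (1 - t)" using t by simp
  ultimately have "0 \<le> (\<Sum>n<N. sqrt_coeff n * (-t)^n)" using sums_unique[OF tail] by (simp only: suminf_zero)
  moreover have "(\<Sum>n<N. \<bar>sqrt_coeff n\<bar> * t^n) = (\<Sum>n<N. (if n = 0 then 2 else 0) - sqrt_coeff n * (-t)^n)"
    by (rule sum.cong) (auto simp: abs_sqrt_coeff neg)
  moreover have "(\<Sum>n<N. (if n = 0 then 2 else (0::real))) = 2" using N by (simp add: sum.delta)
  ultimately show ?thesis by (simp add: sum_subtractf)
qed simp

lemma sum_abs_sqrt_coeff_le: "(\<Sum>n<N. \<bar>sqrt_coeff n\<bar>) \<le> 2"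
proof -
  define t where "t k = 1 - inverse (real (Suc k))" for k
  have "t \<longlonglongrightarrow> 1" unfolding t_def
    using tendsto_diff[OF tendsto_const LIMSEQ_inverse_real_of_nat, of 1] by simp
  hence "(\<lambda>k. \<Sum>n<N. \<bar>sqrt_coeff n\<bar> * t k ^ n) \<longlonglongrightarrow> (\<Sum>n<N. \<bar>sqrt_coeff n\<bar> * 1 ^ n)"
    by (intro tendsto_sum tendsto_mult tendsto_const tendsto_power)
  moreover have "\<forall>k\<ge>0. (\<Sum>n<N. \<bar>sqrt_coeff n\<bar> * t k ^ n) \<le> 2"
    by (intro allI impI sum_abs_sqrt_coeff_powers_le) (auto simp: t_def field_simps)
  ultimately have "(\<Sum>n<N. \<bar>sqrt_coeff n\<bar> * 1 ^ n) \<le> 2" by (intro LIMSEQ_le_const2) blast+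
  thus ?thesis by simp
qed

lemma summable_abs_sqrt_coeff: "summable (\<lambda>n. \<bar>sqrt_coeff n\<bar>)"
  by (rule summableI_nonneg_bounded[of _ 2]) (simp_all add: sum_abs_sqrt_coeff_le)

lemma suminf_abs_sqrt_coeff_le: "(\<Sum>n. \<bar>sqrt_coeff n\<bar>) \<le> 2"
  by (rule suminf_le_const[OF summable_abs_sqrt_coeff sum_abs_sqrt_coeff_le])

definition sqrt_one_plus :: "'a::cstar_algebra \<Rightarrow> 'a" where
  "sqrt_one_plus w = (\<Sum>n. sqrt_coeff n *\<^sub>R w^n)"

lemma norm_sqrt_coeff_scaleR_power_le:
  "norm (w::'a::cstar_algebra) \<le> 1 \<Longrightarrow> norm (sqrt_coeff n *\<^sub>R w^n) \<le> \<bar>sqrt_coeff n\<bar>"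
  using norm_power_ineq[of w n] power_le_one[of "norm w" n]
  by (simp add: mult_left_le)

lemma summable_norm_sqrt_one_plus:
  "norm (w::'a::cstar_algebra) \<le> 1 \<Longrightarrow> summable (\<lambda>n. norm (sqrt_coeff n *\<^sub>R w^n))"
  by (rule summable_comparison_test[OF _ summable_abs_sqrt_coeff])
     (use norm_sqrt_coeff_scaleR_power_le in fastforce)

lemma summable_sqrt_one_plus:
  "norm (w::'a::cstar_algebra) \<le> 1 \<Longrightarrow> summable (\<lambda>n. sqrt_coeff n *\<^sub>R w^n)"
  by (rule summable_norm_cancel[OF summable_norm_sqrt_one_plus])

lemma sqrt_one_plus_mult_self:
  fixes w :: "'a::cstar_algebra"
  assumes w: "norm w \<le> 1"
  shows "sqrt_one_plus w * sqrt_one_plus w = 1 + w"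
proof -
  have "sqrt_one_plus w * sqrt_one_plus w =
      (\<Sum>k. \<Sum>i\<le>k. (sqrt_coeff i *\<^sub>R w^i) * (sqrt_coeff (k - i) *\<^sub>R w^(k - i)))"
    unfolding sqrt_one_plus_def
    by (rule Cauchy_product[OF summable_norm_sqrt_one_plus[OF w] summable_norm_sqrt_one_plus[OF w]])
  also have "\<dots> = (\<Sum>k. (if k \<le> 1 then 1 else 0) *\<^sub>R w^k)"
  proof (rule suminf_cong)
    fix k
    have "(\<Sum>i\<le>k. (sqrt_coeff i *\<^sub>R w^i) * (sqrt_coeff (k - i) *\<^sub>R w^(k - i))) =
        (\<Sum>i\<le>k. (sqrt_coeff i * sqrt_coeff (k - i)) *\<^sub>R w^k)"
      by (rule sum.cong) (simp_all flip: power_add)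
    also have "\<dots> = (if k \<le> 1 then 1 else 0) *\<^sub>R w^k"
      by (simp only: scaleR_sum_left[symmetric] sqrt_coeff_convolution)
    finally show "(\<Sum>i\<le>k. (sqrt_coeff i *\<^sub>R w^i) * (sqrt_coeff (k - i) *\<^sub>R w^(k - i))) =
        (if k \<le> 1 then 1 else 0) *\<^sub>R w^k" .
  qed
  also have "\<dots> = (\<Sum>k\<in>{0,1}. (if k \<le> 1 then 1 else 0) *\<^sub>R w^k)" by (rule suminf_finite) auto
  also have "\<dots> = 1 + w" by simp
  finally show ?thesis .
qed

lemma adj_sqrt_one_plus:
  fixes w :: "'a::cstar_algebra"
  assumes w: "norm w \<le> 1" and sa: "adj w = w"
  shows "adj (sqrt_one_plus w) = sqrt_one_plus w"
  unfolding sqrt_one_plus_def bounded_linear.suminf[OF bounded_linear_adj summable_sqrt_one_plus[OF w]]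
  by (simp add: adj_scaleR adj_power sa)

lemma sqrt_one_plus_commute:
  fixes w c :: "'a::cstar_algebra"
  assumes w: "norm w \<le> 1" and cw: "c * w = w * c"
  shows "c * sqrt_one_plus w = sqrt_one_plus w * c"
proof -
  note s = summable_sqrt_one_plus[OF w]
  have "c * sqrt_one_plus w = (\<Sum>n. c * (sqrt_coeff n *\<^sub>R w^n))"
    unfolding sqrt_one_plus_def by (rule suminf_mult[OF s, symmetric])
  also have "\<dots> = (\<Sum>n. (sqrt_coeff n *\<^sub>R w^n) * c)" using power_commuting_commutes[of w c] cw by simp
  also have "\<dots> = sqrt_one_plus w * c" unfolding sqrt_one_plus_def by (rule suminf_mult2[OF s, symmetric])
  finally show ?thesis .
qed

lemma norm_one_diff_sqrt_one_plus_le: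
  fixes w :: "'a::cstar_algebra"
  assumes w: "norm w \<le> 1"
  shows "norm (1 - sqrt_one_plus w) \<le> 1"
proof -
  have "sqrt_one_plus w - 1 = (\<Sum>n. sqrt_coeff (Suc n) *\<^sub>R w^(Suc n))"
    unfolding sqrt_one_plus_def using suminf_split_head[OF summable_sqrt_one_plus[OF w]] by simp
  hence "norm (1 - sqrt_one_plus w) = norm (\<Sum>n. sqrt_coeff (Suc n) *\<^sub>R w^(Suc n))"
    by (metis norm_minus_commute)
  also have "\<dots> \<le> (\<Sum>n. \<bar>sqrt_coeff (Suc n)\<bar>)"
    by (rule norm_suminf_le[OF norm_sqrt_coeff_scaleR_power_le[OF w]])
       (rule summable_Suc_iff[THEN iffD2, OF summable_abs_sqrt_coeff])
  also have "\<dots> = (\<Sum>n. \<bar>sqrt_coeff n\<bar>) - 1" using suminf_split_head[OF summable_abs_sqrt_coeff] by simp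
  also have "\<dots> \<le> 1" using suminf_abs_sqrt_coeff_le by simp
  finally show ?thesis .
qed

lemma cpositive_sqrt_one_plus:
  fixes w :: "'a::cstar_algebra"
  assumes w: "norm w \<le> 1" and sa: "adj w = w"
  shows "cpositive (sqrt_one_plus w)"
  by (rule cpositive_if_norm_scaleR_one_diff_le[where t=1])
     (use adj_sqrt_one_plus[OF w sa] norm_one_diff_sqrt_one_plus_le[OF w] in simp_all)

lemma cpositive_sqrt:
  fixes P :: "'a::cstar_algebra"
  assumes P: "cpositive P"
  obtains S where "cpositive S" "S * S = P" "\<And>c. c * P = P * c \<Longrightarrow> c * S = S * c"
proof (cases "P = 0")
  case True thus ?thesis using that[of 0] cpositive_zero by auto
next
  case False
  define t where "t = norm P"
  have t0: "0 < t" unfolding t_def using False by simp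
  define w where "w = (1/t) *\<^sub>R P - 1"
  have "norm (1 - (1/t) *\<^sub>R P) \<le> 1"
    using norm_scaleR_one_diff_le_if_cpositive[OF cpositive_scaleR[OF P], of "1/t" 1] t0
    by (simp add: t_def)
  hence nw: "norm w \<le> 1" unfolding w_def by (simp add: norm_minus_commute)
  have saw: "adj w = w" using P unfolding w_def cpositive_def by (simp add: adj_diff adj_scaleR)
  show ?thesis
  proof (rule that[of "sqrt t *\<^sub>R sqrt_one_plus w"])
    show "cpositive (sqrt t *\<^sub>R sqrt_one_plus w)"
      using cpositive_sqrt_one_plus[OF nw saw] t0 by (intro cpositive_scaleR) auto
    have "(sqrt t *\<^sub>R sqrt_one_plus w) * (sqrt t *\<^sub>R sqrt_one_plus w) = t *\<^sub>R (1 + w)"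
      using sqrt_one_plus_mult_self[OF nw] t0 by simp
    thus "(sqrt t *\<^sub>R sqrt_one_plus w) * (sqrt t *\<^sub>R sqrt_one_plus w) = P"
      unfolding w_def using t0 by simp
    fix c assume "c * P = P * c"
    hence "c * w = w * c" unfolding w_def by (simp add: algebra_simps)
    thus "c * (sqrt t *\<^sub>R sqrt_one_plus w) = (sqrt t *\<^sub>R sqrt_one_plus w) * c"
      using sqrt_one_plus_commute[OF nw] by simp
  qed
qed

section \<open>Positivity of \<open>x\<^sup>* x\<close>\<close>

text \<open>Nonzero spectral values of \<open>u\<close> lie in the spectrum of \<open>u + v\<close>, since
  \<open>(u - \<mu>)(v - \<mu>) = (v - \<mu>)(u - \<mu>) = -\<mu> (u + v - \<mu>)\<close>.\<close>

lemma cpositive_orthogonal_summand: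
  fixes u v :: "'a::cstar_algebra"
  assumes su: "adj u = u" and uv: "u * v = 0" and vu: "v * u = 0" and p: "cpositive (u + v)"
  shows "cpositive u"
  unfolding cpositive_iff
proof (rule conjI[OF su], rule ballI)
  fix \<mu> assume mu: "\<mu> \<in> cspectrum u"
  have im: "Im \<mu> = 0" by (rule cspectrum_selfadjoint_real[OF su mu])
  show "Im \<mu> = 0 \<and> 0 \<le> Re \<mu>"
  proof (cases "\<mu> = 0")
    case m0: False
    have e1: "(u - cscale \<mu> 1) * (v - cscale \<mu> 1) = cscale (-\<mu>) ((u + v) - cscale \<mu> 1)"
      using uv by (simp add: algebra_simps cscale_one_mult mult_cscale_one cscale_cscale
          cscale_minus_left cscale_diff_right cscale_add_right)
    have e2: "(v - cscale \<mu> 1) * (u - cscale \<mu> 1) = cscale (-\<mu>) ((u + v) - cscale \<mu> 1)"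
      using vu by (simp add: algebra_simps cscale_one_mult mult_cscale_one cscale_cscale
          cscale_minus_left cscale_diff_right cscale_add_right)
    have "\<mu> \<in> cspectrum (u + v)"
    proof (rule ccontr)
      assume "\<mu> \<notin> cspectrum (u + v)"
      hence "cinvertible (cscale (-\<mu>) ((u + v) - cscale \<mu> 1))" using m0
        by (simp add: cspectrum_def cinvertible_cscale)
      hence "cinvertible (u - cscale \<mu> 1)"
        using cinvertible_commuting_factor[of "u - cscale \<mu> 1" "v - cscale \<mu> 1"] e1 e2 by simp
      thus False using mu by (simp add: cspectrum_def)
    qed
    thus ?thesis using p unfolding cpositive_iff by blast
  qed simp
qed

lemma selfadjoint_jordan_decomposition:
  fixes a :: "'a::cstar_algebra"
  assumes sa: "adj a = a"
  obtains p n where "cpositive p" "cpositive n" "a = p - n" "p * n = 0" "n * p = 0"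
proof -
  obtain r where r: "cpositive r" "r * r = a * a" "\<And>c. c * (a * a) = (a * a) * c \<Longrightarrow> c * r = r * c"
    using cpositive_sqrt[OF cpositive_mult_self_selfadjoint[OF sa]] by blast
  have ra: "a * r = r * a" using r(3)[of a] by (simp add: mult.assoc)
  have sr: "adj r = r" using r(1) by (simp add: cpositive_def)
  have uv: "(r + a) * (r - a) = 0" and vu: "(r - a) * (r + a) = 0"
    using r(2) ra by (simp_all add: algebra_simps)
  have "(r + a) + (r - a) = 2 *\<^sub>R r" "(r - a) + (r + a) = 2 *\<^sub>R r" by (simp_all add: scaleR_2)
  hence "cpositive ((r + a) + (r - a))" "cpositive ((r - a) + (r + a))"
    using cpositive_scaleR[OF r(1), of 2] by (simp_all only:)
  hence "cpositive (r + a)" "cpositive (r - a)"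
    using cpositive_orthogonal_summand[OF _ uv vu] cpositive_orthogonal_summand[OF _ vu uv] sa sr
    by (simp_all add: adj_add adj_diff)
  show ?thesis
  proof (rule that[of "(1/2) *\<^sub>R (r + a)" "(1/2) *\<^sub>R (r - a)"])
    show "cpositive ((1/2) *\<^sub>R (r + a))" "cpositive ((1/2) *\<^sub>R (r - a))"
      by (simp_all add: cpositive_scaleR \<open>cpositive (r + a)\<close> \<open>cpositive (r - a)\<close>)
    show "a = (1/2) *\<^sub>R (r + a) - (1/2) *\<^sub>R (r - a)"
      by (simp add: scaleR_diff_right[symmetric] scaleR_2[symmetric])
    show "(1/2) *\<^sub>R (r + a) * (1/2) *\<^sub>R (r - a) = 0" "(1/2) *\<^sub>R (r - a) * (1/2) *\<^sub>R (r + a) = 0"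
      using uv vu by simp_all
  qed
qed

lemma cartesian_decomposition:
  fixes y :: "'a::cstar_algebra"
  defines "h \<equiv> (1/2) *\<^sub>R (y + adj y)" and "k \<equiv> cscale (- \<i> / 2) (y - adj y)"
  shows "adj h = h" and "adj k = k" and "y = h + cscale \<i> k"
    and "adj y * y + y * adj y = 2 *\<^sub>R (h * h) + 2 *\<^sub>R (k * k)"
proof -
  show "adj h = h" unfolding h_def by (simp add: adj_scaleR adj_add adj_adj add.commute)
  have "adj k = cscale (\<i>/2) (adj y - y)" unfolding k_def by (simp add: adj_cscale adj_diff adj_adj)
  also have "\<dots> = k" unfolding k_def
    by (metis cscale_minus_left cscale_minus_right minus_diff_eq minus_divide_left)
  finally show "adj k = k" .
  have c: "\<i> * (- \<i> / 2) = complex_of_real (1/2)" by (simp add: complex_eq_iff)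
  have "h + cscale \<i> k = (1/2) *\<^sub>R ((y + adj y) + (y - adj y))"
    unfolding h_def k_def cscale_cscale c cscale_of_real scaleR_add_right ..
  thus "y = h + cscale \<i> k" by (simp add: scaleR_2[symmetric])
  have kk: "k * k = (-1/4) *\<^sub>R ((y - adj y) * (y - adj y))"
    unfolding k_def by (simp add: cscale_mult_left cscale_mult_right cscale_cscale flip: cscale_of_real)
  have half: "(1/2) *\<^sub>R z + (1/2) *\<^sub>R z = z" "(1/2) *\<^sub>R z + ((1/2) *\<^sub>R z + w) = z + w" for z w :: 'a
    by (simp_all add: add.assoc[symmetric] scaleR_add_left[symmetric])
  show "adj y * y + y * adj y = 2 *\<^sub>R (h * h) + 2 *\<^sub>R (k * k)"
    unfolding kk h_def by (simp add: algebra_simps scaleR_add_right half)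
qed

text \<open>If \<open>-y\<^sup>* y \<ge> 0\<close>, then \<open>y y\<^sup>* = 2h\<^sup>2 + 2k\<^sup>2 - y\<^sup>* y \<ge> 0\<close>; as \<open>y\<^sup>* y\<close> and \<open>y y\<^sup>*\<close> share their nonzero
  spectrum, the spectrum of \<open>y\<^sup>* y\<close> is \<open>{0}\<close>, so \<open>y\<^sup>* y = 0\<close>.\<close>

lemma eq_zero_if_cpositive_minus_adj_mult_self:
  fixes y :: "'a::cstar_algebra"
  assumes p1: "cpositive (- (adj y * y))"
  shows "y = 0"
proof -
  define h where "h = (1/2) *\<^sub>R (y + adj y)"
  define k where "k = cscale (- \<i> / 2) (y - adj y)"
  note hk = cartesian_decomposition[of y, folded h_def k_def]
  have "y * adj y = 2 *\<^sub>R (h * h) + 2 *\<^sub>R (k * k) + (- (adj y * y))" using hk(4) by (simp add: algebra_simps)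
  hence p2: "cpositive (y * adj y)"
    by (simp only: cpositive_add cpositive_scaleR cpositive_mult_self_selfadjoint hk(1,2) p1)
  have "norm (adj y * y) \<le> 0"
  proof (rule norm_selfadjoint_le_spectral_bound)
    show "adj (adj y * y) = adj y * y" by (simp add: adj_mult adj_adj)
    fix \<mu> assume mu: "\<mu> \<in> cspectrum (adj y * y)"
    have "- \<mu> \<in> cspectrum (- (adj y * y))" using mu by (simp add: cspectrum_minus)
    hence "Im \<mu> = 0 \<and> Re \<mu> \<le> 0" using p1 unfolding cpositive_iff by fastforce
    moreover have "Re \<mu> \<ge> 0" if "\<mu> \<noteq> 0"
      using p2 cspectrum_mult_commute[OF mu that] unfolding cpositive_iff by blast
    ultimately show "cmod \<mu> \<le> 0" by (cases "\<mu> = 0") (auto simp: complex_eq_iff)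
  qed simp
  thus ?thesis using cstar_identity[of y] by simp
qed

text \<open>With \<open>x\<^sup>* x = p - n\<close> as above and \<open>y = x n\<close>, one finds \<open>-y\<^sup>* y = n\<^sup>3 = (s n)\<^sup>2 \<ge> 0\<close> for the square
  root \<open>s\<close> of \<open>n\<close>; hence \<open>y = 0\<close>, so \<open>n\<^sup>3 = 0\<close> and \<open>n = 0\<close>.\<close>

lemma cpositive_adj_mult_self: "cpositive (adj x * (x::'a::cstar_algebra))"
proof -
  define a where "a = adj x * x"
  have "adj a = a" unfolding a_def by (simp add: adj_mult adj_adj)
  then obtain p n where pn: "cpositive p" "cpositive n" "a = p - n" "p * n = 0" "n * p = 0"
    by (rule selfadjoint_jordan_decomposition)
  have sn: "adj n = n" using pn(2) by (simp add: cpositive_def)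
  obtain s where s: "cpositive s" "s * s = n" "\<And>c. c * n = n * c \<Longrightarrow> c * s = s * c"
    using cpositive_sqrt[OF pn(2)] by blast
  have ss: "adj s = s" and sn_comm: "n * s = s * n" using s(1) s(3)[of n] by (simp_all add: cpositive_def)
  define y where "y = x * n"
  have "adj y * y = n * a * n" unfolding y_def a_def by (simp add: adj_mult sn mult.assoc)
  also have "\<dots> = n * p * n - n * n * n" unfolding pn(3) by (simp add: algebra_simps)
  also have "\<dots> = - (n * n * n)" using pn(5) by simp
  finally have yy: "adj y * y = - (n * n * n)" .
  hence "- (adj y * y) = (s * n) * (s * n)" using s(2) sn_comm by (metis minus_minus mult.assoc)
  moreover have "adj (s * n) = s * n" using sn ss sn_comm by (simp add: adj_mult)
  ultimately have "y = 0" using eq_zero_if_cpositive_minus_adj_mult_self cpositive_mult_self_selfadjoint by metis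
  hence "n * n * n = 0" using yy by simp
  hence "n * n = 0" using norm_mult_self_selfadjoint[of "n * n"] sn
    by (simp add: adj_mult mult.assoc)
  hence "n = 0" using norm_mult_self_selfadjoint[OF sn] by simp
  thus ?thesis using pn(1,3) unfolding a_def by simp
qed

section \<open>Positive linear maps and the variance inequality\<close>

lemma cpositive_adj_mult_mult:
  fixes P c :: "'a::cstar_algebra"
  assumes "cpositive P"
  shows "cpositive (adj c * P * c)"
proof -
  obtain S where S: "cpositive S" "S * S = P" using cpositive_sqrt[OF assms] by blast
  hence "adj c * P * c = adj (S * c) * (S * c)"
    unfolding S(2)[symmetric] by (simp add: cpositive_def adj_mult mult.assoc)
  thus ?thesis by (simp add: cpositive_adj_mult_self)
qed

lemma adj_diff_cscale_mult_cinv_mult_diff_cscale: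
  fixes a u :: "'a::cstar_algebra"
  assumes u: "cinvertible u" "adj u = u"
  shows "adj (a - cscale \<alpha> u) * cinv u * (a - cscale \<alpha> u) =
    adj a * cinv u * a - cscale \<alpha> (adj a) - cscale (cnj \<alpha>) a + cscale (cnj \<alpha> * \<alpha>) u"
proof -
  have "cinv u * (u * z) = z" "u * (cinv u * z) = z" for z
    using cinv_left[OF u(1)] cinv_right[OF u(1)] by (metis mult.assoc mult_1_left)+
  thus ?thesis
    using cinv_left[OF u(1)] cinv_right[OF u(1)]
    by (simp add: adj_diff adj_cscale u(2) algebra_simps cscale_mult_left cscale_mult_right
        cscale_cscale cscale_diff_right mult.commute)
qed

context
  fixes \<Phi> :: "'a::cstar_algebra \<Rightarrow> 'b::cstar_algebra"
  assumes \<Phi>: "positive_linear_map \<Phi>"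
begin

lemma positive_linear_map_add: "\<Phi> (x + y) = \<Phi> x + \<Phi> y"
  using \<Phi> by (simp add: positive_linear_map_def)

lemma positive_linear_map_cscale: "\<Phi> (cscale c x) = cscale c (\<Phi> x)"
  using \<Phi> by (simp add: positive_linear_map_def)

lemma positive_linear_map_cpositive: "cpositive x \<Longrightarrow> cpositive (\<Phi> x)"
  using \<Phi> by (simp add: positive_linear_map_def)

lemma positive_linear_map_diff: "\<Phi> (x - y) = \<Phi> x - \<Phi> y"
  using positive_linear_map_add[of x "-y"] positive_linear_map_cscale[of "-1" y]
  by (simp add: cscale_minus_left cscale_one)

lemma positive_linear_map_selfadjoint: "adj h = h \<Longrightarrow> adj (\<Phi> h) = \<Phi> h"
proof -
  assume h: "adj h = h"
  have "cpositive (\<Phi> (norm h *\<^sub>R 1 + h))" "cpositive (\<Phi> (norm h *\<^sub>R 1))"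
    by (intro positive_linear_map_cpositive cpositive_norm_scaleR_one_add cpositive_scaleR
        cpositive_one h norm_ge_zero)+
  moreover have "\<Phi> h = \<Phi> (norm h *\<^sub>R 1 + h) - \<Phi> (norm h *\<^sub>R 1)"
    by (simp flip: positive_linear_map_diff)
  ultimately show ?thesis by (simp add: cpositive_def adj_diff)
qed

lemma positive_linear_map_adj: "\<Phi> (adj x) = adj (\<Phi> x)"
proof -
  define h where "h = (1/2) *\<^sub>R (x + adj x)"
  define k where "k = cscale (- \<i> / 2) (x - adj x)"
  note hk = cartesian_decomposition[of x, folded h_def k_def]
  have "adj x = h - cscale \<i> k"
    using arg_cong[OF hk(3), of adj] hk(1,2) by (simp add: adj_add adj_cscale cscale_minus_left)
  hence "\<Phi> (adj x) = \<Phi> h - cscale \<i> (\<Phi> k)"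
    by (simp add: positive_linear_map_diff positive_linear_map_cscale)
  also have "\<dots> = adj (\<Phi> h + cscale \<i> (\<Phi> k))"
    by (simp add: adj_add adj_cscale cscale_minus_left positive_linear_map_selfadjoint hk(1,2))
  also have "\<Phi> h + cscale \<i> (\<Phi> k) = \<Phi> x"
    using arg_cong[OF hk(3), of \<Phi>] by (simp add: positive_linear_map_add positive_linear_map_cscale)
  finally show ?thesis .
qed

end

theorem lemma3p13:
  fixes \<Phi> :: "'a::cstar_algebra \<Rightarrow> 'b::cstar_algebra"
    and A :: 'a and \<alpha> :: complex
  assumes "positive_linear_map \<Phi>"
    and "cinvertible (\<Phi> 1)"
  shows "cle (\<Phi> (adj A * A) - adj (\<Phi> A) * cinv (\<Phi> 1) * \<Phi> A)
             (\<Phi> (adj (A - cscale \<alpha> 1) * (A - cscale \<alpha> 1)))"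
proof -
  note \<Phi> = assms(1) and inv = assms(2)
  define D where "D = \<Phi> A - cscale \<alpha> (\<Phi> 1)"
  have pos: "cpositive (\<Phi> 1)" by (rule positive_linear_map_cpositive[OF \<Phi> cpositive_one])
  have "\<Phi> (adj (A - cscale \<alpha> 1) * (A - cscale \<alpha> 1)) =
      \<Phi> (adj A * A - cscale \<alpha> (adj A) - cscale (cnj \<alpha>) A + cscale (cnj \<alpha> * \<alpha>) 1)"
    using adj_diff_cscale_mult_cinv_mult_diff_cscale[of 1 A \<alpha>] by simp
  also have "\<dots> = \<Phi> (adj A * A) - cscale \<alpha> (adj (\<Phi> A)) - cscale (cnj \<alpha>) (\<Phi> A) + cscale (cnj \<alpha> * \<alpha>) (\<Phi> 1)"
    by (simp add: positive_linear_map_add[OF \<Phi>] positive_linear_map_diff[OF \<Phi>]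
        positive_linear_map_cscale[OF \<Phi>] positive_linear_map_adj[OF \<Phi>])
  also have "\<dots> = (\<Phi> (adj A * A) - adj (\<Phi> A) * cinv (\<Phi> 1) * \<Phi> A) + adj D * cinv (\<Phi> 1) * D"
    unfolding D_def using pos inv
    by (simp add: adj_diff_cscale_mult_cinv_mult_diff_cscale cpositive_def)
  finally show ?thesis
    unfolding cle_def using cpositive_adj_mult_mult[OF cpositive_cinv[OF pos inv], of D] by simp
qed

end
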